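(* Let $m,j$ be non-negative integers. Then (a) $\displaystyle\sum_{\gamma\models m,\ v(\gamma)=j}(-1)^{k(\gamma)}=(-1)^{m+j}\binom{\lfloor m/2\rfloor}{j}$; (b) $\displaystyle\sum_{\gamma\models m,\ u(\gamma)=j}(-1)^{k(\gamma)}=\begin{cases}0&\text{if } m\text{ is even},\\ (-1)^{m+j}\dbinom{\lfloor m/2\rfloor}{j}&\text{if } m\text{ is odd},\end{cases}$ where the sums run over compositions $\gamma$ of $m$.
   Context: A composition $\gamma=(g_1,\ldots,g_k)$ of $m$ (written $\gamma\models m$) is a sequence of positive integers with sum $m$ (the empty composition if $m=0$); $k(\gamma)=k$ is the number of parts, $v(\gamma)=\#\{i: g_i>1\}$ and $u(\gamma)=\#\{i\ne 1: g_i>1\}$. *)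

theory Defs
  imports Main
begin

definition compositions :: "nat \<Rightarrow> nat list set" where
  "compositions m = {gs. (\<forall>g\<in>set gs. 0 < g) \<and> sum_list gs = m}"

definition kparts :: "nat list \<Rightarrow> nat" where
  "kparts gs = length gs"

definition vparts :: "nat list \<Rightarrow> nat" where
  "vparts gs = length (filter (\<lambda>g. 1 < g) gs)"

definition uparts :: "nat list \<Rightarrow> nat" where
  "uparts gs = card {i. 1 \<le> i \<and> i < length gs \<and> 1 < gs ! i}"

end

theory Submission
  imports Defs
begin

text \<open>Splitting off the first part of a composition gives, for the signed count \<open>V m j\<close>
  (\<open>vsigned\<close> below) of compositions of \<open>m\<close> with \<open>j\<close> parts greater than 1, the Pascal-type
  recurrence \<open>V (m + 2) j = V m j - V m (j - 1)\<close> (with \<open>V m (-1) = 0\<close>), whose solution is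
  \<open>(-1)^(m+j) * (\<lfloor>m/2\<rfloor> choose j)\<close>.
  Deleting the first part, which \<open>u\<close> ignores, turns the sum in (b) into \<open>-\<Sum>i<m. V i j\<close>;
  since \<open>V (2t + 1) j = - V (2t) j\<close>, this sum telescopes to \<open>0\<close> or \<open>-V (m - 1) j\<close>.\<close>

lemma compositions_0 [simp]: "compositions 0 = {[]}"
  unfolding compositions_def
  by (auto simp: sum_list_eq_0_iff) (metis list.set_intros(1) neq_Nil_conv not_less_zero)

lemma compositions_by_first_part:
  assumes "0 < m"
  shows "compositions m = (\<Union>i<m. Cons (m - i) ` compositions i)"
proof (intro equalityI subsetI)
  fix gs assume gs: "gs \<in> compositions m"
  then obtain g r where "gs = g # r"
    using assms unfolding compositions_def by (cases gs) auto
  with gs have "sum_list r < m" "r \<in> compositions (sum_list r)" "g = m - sum_list r"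
    unfolding compositions_def by auto
  with \<open>gs = g # r\<close> show "gs \<in> (\<Union>i<m. Cons (m - i) ` compositions i)" by blast
qed (auto simp: compositions_def)

lemma finite_compositions [simp]: "finite (compositions m)"
proof (induction m rule: less_induct)
  case (less m)
  then show ?case
    by (cases "m = 0") (auto simp: compositions_by_first_part)
qed

lemma sum_compositions_by_first_part:
  assumes "0 < m"
  shows "sum f (compositions m) = (\<Sum>i<m. \<Sum>gs\<in>compositions i. f ((m - i) # gs))"
proof -
  have "sum f (compositions m) = (\<Sum>i<m. sum f (Cons (m - i) ` compositions i))"
    unfolding compositions_by_first_part[OF assms] by (rule sum.UNION_disjoint) auto
  then show ?thesis by (simp add: sum.reindex)
qed

lemma vparts_Cons: "vparts (g # gs) = (if 1 < g then Suc (vparts gs) else vparts gs)"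
  by (simp add: vparts_def)

lemma uparts_Cons: "uparts (g # gs) = vparts gs"
proof -
  have "{i. 1 \<le> i \<and> i < length (g # gs) \<and> 1 < (g # gs) ! i}
      = Suc ` {i. i < length gs \<and> 1 < gs ! i}"
    by (auto simp: image_iff Suc_le_eq gr0_conv_Suc)
  then show ?thesis
    by (simp add: uparts_def vparts_def length_filter_conv_card card_image)
qed

definition vsigned :: "nat \<Rightarrow> nat \<Rightarrow> int" where
  "vsigned m j = (\<Sum>gs\<in>compositions m. if vparts gs = j then (-1) ^ length gs else 0)"

lemma vsigned_0: "vsigned 0 j = (if j = 0 then 1 else 0)"
  by (simp add: vsigned_def vparts_def)

lemma vsigned_Suc:
  "vsigned (Suc n) j = - vsigned n j - (if j = 0 then 0 else \<Sum>i<n. vsigned i (j - 1))"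
proof -
  let ?w = "\<lambda>gs. if vparts gs = j then (-1::int) ^ length gs else 0"
  have big_first_part: "(\<Sum>gs\<in>compositions i. ?w ((Suc n - i) # gs))
      = - (if j = 0 then 0 else vsigned i (j - 1))" if "i < n" for i
  proof -
    have "1 < Suc n - i" using that by simp
    then show ?thesis
      by (cases j) (auto simp: vsigned_def vparts_Cons sum_negf[symmetric] intro: sum.cong)
  qed
  have first_part_1: "(\<Sum>gs\<in>compositions n. ?w ((Suc n - n) # gs)) = - vsigned n j"
    by (auto simp: vsigned_def vparts_Cons sum_negf[symmetric] intro!: sum.cong)
  have "vsigned (Suc n) j = (\<Sum>i<Suc n. \<Sum>gs\<in>compositions i. ?w ((Suc n - i) # gs))"
    unfolding vsigned_def by (rule sum_compositions_by_first_part) simp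
  also have "\<dots> = (\<Sum>i<n. - (if j = 0 then 0 else vsigned i (j - 1))) - vsigned n j"
    using big_first_part first_part_1 by simp
  finally show ?thesis
    by (simp add: sum_negf)
qed

lemma vsigned_Suc_Suc:
  "vsigned (Suc (Suc n)) j = vsigned n j - (if j = 0 then 0 else vsigned n (j - 1))"
  using vsigned_Suc[of "Suc n" j] vsigned_Suc[of n j] by simp

lemma vsigned_eq: "vsigned m j = (-1) ^ (m + j) * int ((m div 2) choose j)"
proof (induction m arbitrary: j rule: nat_induct2)
  case 0
  then show ?case by (simp add: vsigned_0)
next
  case 1
  then show ?case using vsigned_Suc[of 0 j] by (simp add: vsigned_0)
next
  case (step n)
  then show ?case
    by (cases j) (simp_all add: vsigned_Suc_Suc[simplified] algebra_simps)
qed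

lemma sum_lessThan_odd_cancel:
  fixes f :: "nat \<Rightarrow> 'a::ab_group_add"
  assumes "\<And>t. f (Suc (2 * t)) = - f (2 * t)"
  shows "(\<Sum>i<m. f i) = (if even m then 0 else f (m - 1))"
proof (induction m)
  case (Suc m)
  then show ?case
    using assms by (cases "even m") (auto elim!: oddE)
qed simp

lemma sum_vsigned_lessThan: "(\<Sum>i<m. vsigned i j) = (if even m then 0 else vsigned (m - 1) j)"
  by (rule sum_lessThan_odd_cancel) (simp add: vsigned_eq)

theorem lemma5p4:
  fixes m j :: nat
  shows "(\<Sum>gs\<in>{gs\<in>compositions m. vparts gs = j}. (-1::int) ^ kparts gs)
           = (-1) ^ (m + j) * int ((m div 2) choose j)
         \<and> (0 < m \<longrightarrow>
            (\<Sum>gs\<in>{gs\<in>compositions m. uparts gs = j}. (-1::int) ^ kparts gs)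
              = (if even m then 0 else (-1) ^ (m + j) * int ((m div 2) choose j)))"
proof (intro conjI impI)
  show "(\<Sum>gs\<in>{gs\<in>compositions m. vparts gs = j}. (-1::int) ^ kparts gs)
      = (-1) ^ (m + j) * int ((m div 2) choose j)"
    using vsigned_eq[of m j] by (simp add: vsigned_def kparts_def sum.inter_filter)
  assume "0 < m"
  have "(\<Sum>gs\<in>{gs\<in>compositions m. uparts gs = j}. (-1::int) ^ kparts gs)
      = (\<Sum>i<m. \<Sum>gs\<in>compositions i.
           if uparts ((m - i) # gs) = j then (-1) ^ length ((m - i) # gs) else 0)"
    using sum_compositions_by_first_part[OF \<open>0 < m\<close>]
    by (simp add: kparts_def sum.inter_filter)
  also have "\<dots> = - (\<Sum>i<m. vsigned i j)"
    by (simp add: uparts_Cons vsigned_def sum_negf[symmetric]) (auto intro!: sum.cong)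
  also have "\<dots> = (if even m then 0 else (-1) ^ (m + j) * int ((m div 2) choose j))"
    unfolding sum_vsigned_lessThan by (auto simp: vsigned_eq elim!: oddE)
  finally show "(\<Sum>gs\<in>{gs\<in>compositions m. uparts gs = j}. (-1::int) ^ kparts gs)
      = (if even m then 0 else (-1) ^ (m + j) * int ((m div 2) choose j))" .
qed

end
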